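(* Let $t>0$, $\kappa\in(-1,1)$ and set $\Phi_{\kappa,t}:=\alpha\circ\phi_{\kappa,t}$. Then $\Phi_{\kappa,t}$ is invertible in a neighborhood of $z=1$ (with $\Phi_{\kappa,t}(1)=0$), and its inverse is given near the origin by $$\Phi_{\kappa,t}^{-1}(z)=1+\sum_{n\geq1}\frac{(-1)^n}{n}\left\{\sum_{k=1}^n(-1)^k\frac{2n}{n+k}\binom{n+k}{n-k}\,b_k(\kappa,t)\right\}z^n,$$ where $b_k(\kappa,t):=k\,2^{2k}a_k(\kappa,t)$ for $k\ge1$.
   Context: Let $\alpha(z):=\frac{1-\sqrt{1-z}}{1+\sqrt{1-z}}$ (principal branch), a bijection of $\mathbb{C}\setminus[1,\infty)$ onto the open unit disc $\mathbb{D}$ with inverse $\alpha^{-1}(z)=\frac{4z}{(1+z)^2}$. For $t>0$ let $\xi_{2t}(z):=\frac{z-1}{z+1}e^{tz}$. Define $\phi_{\kappa,t}(z):=\frac{z^2}{z^2-\kappa^2}\,\alpha^{-1}(\xi_{2t}(z))$ near $z=1$; it is locally invertible near $z=1$ with $\phi_{\kappa,t}(1)=0$, and $a_n(\kappa,t):=\frac{1}{n!}\partial_z^{n-1}\left[\frac{z-1}{\phi_{\kappa,t}(z)}\right]^n\big|_{z=1}$ ($n\geq1$) are the Taylor coefficients of its local inverse: $\phi_{\kappa,t}^{-1}(u)=1+\sum_{n\ge1}a_n(\kappa,t)u^n$. *)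

theory Defs
  imports "HOL-Analysis.Analysis"
begin

definition alpha :: "complex \<Rightarrow> complex" where
  "alpha z = (1 - csqrt (1 - z)) / (1 + csqrt (1 - z))"

definition alpha_inv :: "complex \<Rightarrow> complex" where
  "alpha_inv z = 4 * z / (1 + z)^2"

definition xi2 :: "real \<Rightarrow> complex \<Rightarrow> complex" where
  "xi2 t z = (z - 1) / (z + 1) * exp (of_real t * z)"

definition phi :: "real \<Rightarrow> real \<Rightarrow> complex \<Rightarrow> complex" where
  "phi \<kappa> t z = z^2 / (z^2 - (of_real \<kappa>)^2) * alpha_inv (xi2 t z)"

definition Phi :: "real \<Rightarrow> real \<Rightarrow> complex \<Rightarrow> complex" where
  "Phi \<kappa> t = alpha \<circ> phi \<kappa> t"

text \<open>The function (z-1)/phi(z), with its removable singularity at z = 1 filled in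
  by the limiting value 1/phi'(1).\<close>
definition phi_quot :: "real \<Rightarrow> real \<Rightarrow> complex \<Rightarrow> complex" where
  "phi_quot \<kappa> t z = (if z = 1 then 1 / deriv (phi \<kappa> t) 1 else (z - 1) / phi \<kappa> t z)"

definition a_coef :: "real \<Rightarrow> real \<Rightarrow> nat \<Rightarrow> complex" where
  "a_coef \<kappa> t n = (deriv ^^ (n - 1)) (\<lambda>z. (phi_quot \<kappa> t z)^n) 1 / fact n"

definition b_coef :: "real \<Rightarrow> real \<Rightarrow> nat \<Rightarrow> complex" where
  "b_coef \<kappa> t k = of_nat k * 2^(2*k) * a_coef \<kappa> t k"

definition c_coef :: "real \<Rightarrow> real \<Rightarrow> nat \<Rightarrow> complex" where
  "c_coef \<kappa> t n = (-1)^n / of_nat n *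
     (\<Sum>k=1..n. (-1)^k * (2 * of_nat n / of_nat (n + k)) * of_nat ((n + k) choose (n - k))
                 * b_coef \<kappa> t k)"

end

theory Submission
  imports Defs "HOL-Complex_Analysis.Complex_Analysis"
begin

text \<open>Lagrange inversion: if \<open>F\<close> is univalent near \<open>c\<close> with \<open>F c = 0\<close>, expanding Cauchy's
  integral for \<open>F\<^sup>-\<^sup>1\<close> in a geometric series and integrating by parts shows that the
  \<open>n\<close>-th Taylor coefficient of \<open>F\<^sup>-\<^sup>1\<close> at \<open>0\<close> is \<open>(2\<pi>i n)\<^sup>-\<^sup>1 \<ointegral> F\<^sup>-\<^sup>n\<close>.
  For \<open>F = \<Phi>\<close> we have \<open>4/\<phi> = (1 + \<Phi>)\<^sup>2/\<Phi> = \<Phi> + 2 + \<Phi>\<^sup>-\<^sup>1\<close>, so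
  \<open>\<Phi>\<^sup>-\<^sup>n = D\<^sub>n(4/\<phi>) - D\<^sub>n\<^sub>-\<^sub>1(4/\<phi>) - \<Phi>\<^sup>n\<close>, where \<open>D\<^sub>n(x + 2 + 1/x) = x\<^sup>-\<^sup>n + \<dots> + x\<^sup>n\<close>
  is the Dirichlet kernel written as a polynomial. The integral of \<open>\<Phi>\<^sup>n\<close> vanishes, and as \<open>\<phi>\<close>
  has a simple zero at \<open>1\<close>, Cauchy's formula for derivatives gives \<open>\<ointegral> (4/\<phi>)\<^sup>k = 2\<pi>i b\<^sub>k\<close>.
  The coefficients of \<open>D\<^sub>n - D\<^sub>n\<^sub>-\<^sub>1\<close> are exactly the binomial weights in \<open>c_coef\<close>.\<close>

section \<open>Lagrange inversion on a circle\<close>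

lemma has_contour_integral_inverse_value:
  fixes F :: "complex \<Rightarrow> complex"
  assumes holF: "F holomorphic_on ball c R" and inj: "inj_on F (ball c R)"
    and \<rho>: "0 < \<rho>" "\<rho> < R" and w0: "w0 \<in> ball c \<rho>"
  shows "((\<lambda>w. w * deriv F w / (F w - F w0)) has_contour_integral (2 * pi * \<i> * w0)) (circlepath c \<rho>)"
proof -
  define Q where "Q = (\<lambda>w. if w = w0 then deriv F w0 else (F w - F w0) / (w - w0))"
  have w0R: "w0 \<in> ball c R" using w0 \<rho> by auto
  have holQ: "Q holomorphic_on ball c R"
    unfolding Q_def by (rule pole_lemma[OF holF]) (use w0R in simp)
  have Q_nonzero: "Q w \<noteq> 0" if "w \<in> ball c R" for w
  proof (cases "w = w0")
    case True then show ?thesis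
      using holomorphic_injective_imp_regular[OF holF open_ball inj w0R] by (simp add: Q_def)
  next
    case False
    then have "F w \<noteq> F w0" using inj that w0R by (auto simp: inj_on_def)
    then show ?thesis using False by (simp add: Q_def)
  qed
  have hol: "(\<lambda>w. w * deriv F w / Q w) holomorphic_on cball c \<rho>"
    by (rule holomorphic_on_subset[of _ "ball c R"])
       (intro holomorphic_intros holomorphic_deriv holF holQ, use Q_nonzero \<rho> in auto)
  have "((\<lambda>w. w * deriv F w / Q w / (w - w0)) has_contour_integral
      (2 * pi * \<i> * (w0 * deriv F w0 / Q w0))) (circlepath c \<rho>)"
    using Cauchy_integral_circlepath_simple[OF hol, of w0] w0 by (simp add: dist_norm norm_minus_commute)
  moreover have "w0 * deriv F w0 / Q w0 = w0"
    using Q_nonzero[OF w0R] by (simp add: Q_def)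
  ultimately have I: "((\<lambda>w. w * deriv F w / Q w / (w - w0)) has_contour_integral (2 * pi * \<i> * w0))
      (circlepath c \<rho>)"
    by simp
  show ?thesis
  proof (rule has_contour_integral_eq[OF I])
    fix w assume "w \<in> path_image (circlepath c \<rho>)"
    then have w: "w \<in> sphere c \<rho>" using \<rho> by (simp add: path_image_circlepath_nonneg)
    then have "w \<noteq> w0" "w \<in> ball c R" using w0 \<rho> by auto
    then have "F w \<noteq> F w0" using inj w0R by (auto simp: inj_on_def)
    with \<open>w \<noteq> w0\<close> show "w * deriv F w / Q w / (w - w0) = w * deriv F w / (F w - F w0)"
      by (simp add: Q_def)
  qed
qed

lemma contour_integral_inverse_power_by_parts:
  fixes F :: "complex \<Rightarrow> complex"
  assumes holF: "F holomorphic_on ball c R" and inj: "inj_on F (ball c R)" and F0: "F c = 0"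
    and \<rho>: "0 < \<rho>" "\<rho> < R" and n: "n \<ge> 1"
  shows "contour_integral (circlepath c \<rho>) (\<lambda>w. w * deriv F w / F w ^ Suc n)
       = contour_integral (circlepath c \<rho>) (\<lambda>w. 1 / F w ^ n) / of_nat n"
proof -
  define S where "S = ball c R - {c}"
  define g where "g = (\<lambda>w. w * deriv F w / F w ^ Suc n)"
  have SR: "S \<subseteq> ball c R" by (auto simp: S_def)
  have F_nonzero: "F w \<noteq> 0" if "w \<in> S" for w
    using inj that F0 \<rho> by (auto simp: S_def inj_on_def)
  have primitive: "((\<lambda>w. w / F w ^ n) has_field_derivative (1 / F w ^ n - of_nat n * g w)) (at w within S)"
    if "w \<in> S" for w
  proof -
    have "(F has_field_derivative deriv F w) (at w)"
      using holF SR that by (meson holomorphic_derivI open_ball subsetD)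
    then have "((\<lambda>w. w / F w ^ n) has_field_derivative
        ((1 * F w ^ n - w * (of_nat n * F w ^ (n - 1) * deriv F w)) / (F w ^ n * F w ^ n))) (at w)"
      using F_nonzero[OF that] by (auto intro!: derivative_eq_intros)
    moreover have "(1 * F w ^ n - w * (of_nat n * F w ^ (n - 1) * deriv F w)) / (F w ^ n * F w ^ n)
        = 1 / F w ^ n - of_nat n * g w"
      using F_nonzero[OF that] n by (cases n) (auto simp: g_def field_simps)
    ultimately show ?thesis by (simp add: has_field_derivative_at_within)
  qed
  have path: "path_image (circlepath c \<rho>) \<subseteq> S"
    using \<rho> by (auto simp: S_def path_image_circlepath_nonneg)
  have cont: "continuous_on S F" "continuous_on S (deriv F)"
    using holF holomorphic_deriv[OF holF open_ball]
    by (auto intro: continuous_on_subset[OF _ SR] holomorphic_on_imp_continuous_on)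
  have "g contour_integrable_on circlepath c \<rho>"
    unfolding g_def
    by (rule contour_integrable_continuous_circlepath, rule continuous_on_subset[OF _ path])
       (intro continuous_intros cont, use F_nonzero in auto)
  then have "((\<lambda>w. of_nat n * g w) has_contour_integral
      of_nat n * contour_integral (circlepath c \<rho>) g) (circlepath c \<rho>)"
    by (intro has_contour_integral_lmul has_contour_integral_integral)
  moreover have "((\<lambda>w. 1 / F w ^ n - of_nat n * g w) has_contour_integral 0) (circlepath c \<rho>)"
    using contour_integral_primitive[OF primitive _ path] by simp
  ultimately have "((\<lambda>w. 1 / F w ^ n) has_contour_integral
      of_nat n * contour_integral (circlepath c \<rho>) g) (circlepath c \<rho>)"
    using has_contour_integral_add by fastforce
  then show ?thesis
    using n by (simp add: contour_integral_unique g_def)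
qed

text \<open>Expanding the kernel of the preceding integral in a geometric series in \<open>F w0 / F w\<close>,
  uniformly convergent on the circle since \<open>\<bar>F w0\<bar>\<close> stays below \<open>min \<bar>F\<bar>\<close> there.\<close>

lemma inverse_value_sums_contour_integrals:
  fixes F :: "complex \<Rightarrow> complex"
  assumes holF: "F holomorphic_on ball c R" and inj: "inj_on F (ball c R)"
    and \<rho>: "0 < \<rho>" "\<rho> < R" and w0: "w0 \<in> ball c \<rho>"
    and m: "m > 0" and m_le: "\<And>w. w \<in> sphere c \<rho> \<Longrightarrow> m \<le> norm (F w)"
    and small: "norm (F w0) < m"
  shows "(\<lambda>n. F w0 ^ n * contour_integral (circlepath c \<rho>) (\<lambda>w. w * deriv F w / F w ^ Suc n))
    sums (2 * pi * \<i> * w0)"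
proof -
  define z where "z = F w0"
  define G where "G = (\<lambda>w. w * deriv F w)"
  define f where "f = (\<lambda>n w. z ^ n * (G w / F w ^ Suc n))"
  have path: "path_image (circlepath c \<rho>) = sphere c \<rho>"
    using \<rho> by (simp add: path_image_circlepath_nonneg)
  have cont: "continuous_on (sphere c \<rho>) F" "continuous_on (sphere c \<rho>) G"
    using holF holomorphic_deriv[OF holF open_ball] \<rho> unfolding G_def
    by (auto intro!: continuous_intros intro: continuous_on_subset holomorphic_on_imp_continuous_on)
  have F_nonzero: "F w \<noteq> 0" if "w \<in> sphere c \<rho>" for w
    using m_le[OF that] m by auto
  have integrable: "(\<lambda>w. G w / F w ^ Suc n) contour_integrable_on circlepath c \<rho>" for n
    by (rule contour_integrable_continuous_circlepath, unfold path)
       (intro continuous_intros cont, use F_nonzero in auto)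
  have "bounded (G ` sphere c \<rho>)"
    by (rule compact_imp_bounded[OF compact_continuous_image[OF cont(2) compact_sphere]])
  then obtain B where B: "\<And>w. w \<in> sphere c \<rho> \<Longrightarrow> norm (G w) \<le> B"
    unfolding bounded_iff by (meson imageI)
  have bound: "norm (f n w) \<le> B / m * (norm z / m) ^ n" if w: "w \<in> sphere c \<rho>" for n w
  proof -
    have "0 \<le> B" using B[OF w] norm_ge_zero order_trans by blast
    have "norm z / norm (F w) \<le> norm z / m"
      by (rule divide_left_mono) (use m m_le[OF w] in \<open>auto intro!: mult_pos_pos\<close>)
    then have num: "norm (G w) * (norm z / norm (F w)) ^ n \<le> B * (norm z / m) ^ n"
      by (intro mult_mono B[OF w] power_mono) (auto simp: \<open>0 \<le> B\<close>)
    have "norm (G w) * (norm z / norm (F w)) ^ n / norm (F w) \<le> B * (norm z / m) ^ n / m"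
      by (rule frac_le[OF _ num]) (use m m_le[OF w] \<open>0 \<le> B\<close> in auto)
    then show ?thesis
      by (simp add: f_def norm_mult norm_divide norm_power power_divide mult_ac)
  qed
  have summable: "summable (\<lambda>n. B / m * (norm z / m) ^ n)"
    using small m by (intro summable_mult summable_geometric) (simp add: z_def)
  have uniform: "uniform_limit (sphere c \<rho>) (\<lambda>n w. \<Sum>i<n. f i w) (\<lambda>w. \<Sum>i. f i w) sequentially"
    by (rule Weierstrass_m_test[OF bound summable])
  have pointwise: "(\<lambda>i. f i w) sums (G w / (F w - z))" if w: "w \<in> sphere c \<rho>" for w
  proof -
    have "norm (z / F w) < 1"
      using m_le[OF w] small F_nonzero[OF w] by (simp add: z_def norm_divide divide_less_eq)
    then have "(\<lambda>i. G w / F w * (z / F w) ^ i) sums (G w / F w * (1 / (1 - z / F w)))"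
      by (intro sums_mult geometric_sums)
    moreover have "F w \<noteq> z" using m_le[OF w] small by (auto simp: z_def)
    ultimately show ?thesis
      using F_nonzero[OF w] by (simp add: f_def power_divide field_simps)
  qed
  have "(\<lambda>n. contour_integral (circlepath c \<rho>) (\<lambda>w. \<Sum>i<n. f i w)) \<longlonglongrightarrow>
      contour_integral (circlepath c \<rho>) (\<lambda>w. \<Sum>i. f i w)"
    by (rule contour_integral_uniform_limit_circlepath(2)[OF _ uniform _ \<rho>(1)])
       (unfold f_def, intro always_eventually allI contour_integrable_sum finite_lessThan
          contour_integrable_lmul integrable, simp)
  moreover have "contour_integral (circlepath c \<rho>) (\<lambda>w. \<Sum>i. f i w)
      = contour_integral (circlepath c \<rho>) (\<lambda>w. G w / (F w - z))"
    by (rule contour_integral_eq) (metis pointwise sums_unique path)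
  moreover have "\<dots> = 2 * pi * \<i> * w0"
    unfolding z_def G_def
    by (rule contour_integral_unique[OF has_contour_integral_inverse_value[OF holF inj \<rho> w0]])
  moreover have "contour_integral (circlepath c \<rho>) (\<lambda>w. \<Sum>i<n. f i w)
     = (\<Sum>i<n. z ^ i * contour_integral (circlepath c \<rho>) (\<lambda>w. G w / F w ^ Suc i))" for n
    unfolding f_def
    by (simp only: contour_integral_sum contour_integrable_lmul integrable contour_integral_lmul
        finite_lessThan)
  ultimately show ?thesis
    unfolding sums_def z_def G_def by simp
qed

lemma Lagrange_inversion_value:
  fixes F :: "complex \<Rightarrow> complex"
  assumes holF: "F holomorphic_on ball c R" and inj: "inj_on F (ball c R)" and F0: "F c = 0"
    and \<rho>: "0 < \<rho>" "\<rho> < R" and w0: "w0 \<in> ball c \<rho>"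
    and m: "m > 0" and m_le: "\<And>w. w \<in> sphere c \<rho> \<Longrightarrow> m \<le> norm (F w)"
    and small: "norm (F w0) < m"
  shows "(\<lambda>n. contour_integral (circlepath c \<rho>) (\<lambda>w. 1 / F w ^ Suc n) / (2 * pi * \<i> * of_nat (Suc n))
      * F w0 ^ Suc n) sums (w0 - c)"
proof -
  define I where "I = (\<lambda>n. contour_integral (circlepath c \<rho>) (\<lambda>w. w * deriv F w / F w ^ Suc n))"
  have "c \<in> ball c \<rho>" using \<rho> by simp
  from has_contour_integral_inverse_value[OF holF inj \<rho> this]
  have I0: "I 0 = 2 * pi * \<i> * c"
    by (simp add: I_def F0 contour_integral_unique)
  have I_Suc: "I (Suc n) = contour_integral (circlepath c \<rho>) (\<lambda>w. 1 / F w ^ Suc n) / of_nat (Suc n)" for n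
    unfolding I_def by (rule contour_integral_inverse_power_by_parts[OF holF inj F0 \<rho>]) simp
  have "(\<lambda>n. F w0 ^ n * I n) sums (2 * pi * \<i> * w0)"
    unfolding I_def by (rule inverse_value_sums_contour_integrals[OF holF inj \<rho> w0 m m_le small])
  then have "(\<lambda>n. F w0 ^ Suc n * I (Suc n)) sums (2 * pi * \<i> * w0 - I 0)"
    by (subst sums_Suc_iff) simp
  then have "(\<lambda>n. F w0 ^ Suc n * I (Suc n) / (2 * pi * \<i>)) sums ((2 * pi * \<i> * w0 - I 0) / (2 * pi * \<i>))"
    by (rule sums_divide)
  moreover have "F w0 ^ Suc n * I (Suc n) / (2 * pi * \<i>) =
      contour_integral (circlepath c \<rho>) (\<lambda>w. 1 / F w ^ Suc n) / (2 * pi * \<i> * of_nat (Suc n))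
      * F w0 ^ Suc n" for n
    by (simp add: I_Suc field_simps)
  moreover have "(2 * pi * \<i> * w0 - I 0) / (2 * pi * \<i>) = w0 - c"
    by (simp add: I0 field_simps)
  ultimately show ?thesis
    by simp
qed

lemma Lagrange_inversion_circlepath:
  fixes F :: "complex \<Rightarrow> complex"
  assumes holF: "F holomorphic_on ball c R" and inj: "inj_on F (ball c R)" and F0: "F c = 0"
    and \<rho>: "0 < \<rho>" "\<rho> < R"
  obtains r where "r > 0" "ball 0 r \<subseteq> F ` ball c \<rho>"
    "\<forall>z \<in> ball 0 r.
      (\<lambda>n. contour_integral (circlepath c \<rho>) (\<lambda>w. 1 / F w ^ Suc n) / (2 * pi * \<i> * of_nat (Suc n))
             * z ^ Suc n) sums (the_inv_into (ball c \<rho>) F z - c)"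
proof -
  have "continuous_on (sphere c \<rho>) (\<lambda>w. norm (F w))"
    using holF \<rho> by (auto intro!: continuous_intros
        intro: continuous_on_subset[OF holomorphic_on_imp_continuous_on])
  then obtain w1 where w1: "w1 \<in> sphere c \<rho>" and min: "\<And>w. w \<in> sphere c \<rho> \<Longrightarrow> norm (F w1) \<le> norm (F w)"
    using continuous_attains_inf[of "sphere c \<rho>" "\<lambda>w. norm (F w)"] \<rho> by auto
  have m: "norm (F w1) > 0"
    using w1 \<rho> F0 inj_onD[OF inj, of w1 c] by auto
  have injS: "inj_on F (ball c \<rho>)" by (rule inj_on_subset[OF inj]) (use \<rho> in auto)
  have "open (F ` ball c \<rho>)"
    by (rule open_mapping_thm3[OF holomorphic_on_subset[OF holF]]) (use \<rho> injS in auto)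
  moreover have "0 \<in> F ` ball c \<rho>" using F0 \<rho> by (metis centre_in_ball image_eqI)
  ultimately obtain r0 where r0: "r0 > 0" "ball 0 r0 \<subseteq> F ` ball c \<rho>" by (meson openE)
  show thesis
  proof (rule that[of "min r0 (norm (F w1))"])
    show "min r0 (norm (F w1)) > 0" using r0 m by simp
    show "ball 0 (min r0 (norm (F w1))) \<subseteq> F ` ball c \<rho>" using r0 by auto
  next
    show "\<forall>z \<in> ball 0 (min r0 (norm (F w1))).
      (\<lambda>n. contour_integral (circlepath c \<rho>) (\<lambda>w. 1 / F w ^ Suc n) / (2 * pi * \<i> * of_nat (Suc n))
             * z ^ Suc n) sums (the_inv_into (ball c \<rho>) F z - c)"
    proof
      fix z :: complex assume z: "z \<in> ball 0 (min r0 (norm (F w1)))"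
      then have "z \<in> F ` ball c \<rho>" using r0 by auto
      then have "the_inv_into (ball c \<rho>) F z \<in> ball c \<rho>" "F (the_inv_into (ball c \<rho>) F z) = z"
        using the_inv_into_into[OF injS _ subset_refl] f_the_inv_into_f[OF injS] by auto
      with Lagrange_inversion_value[OF holF inj F0 \<rho> _ m min] z
      show "(\<lambda>n. contour_integral (circlepath c \<rho>) (\<lambda>w. 1 / F w ^ Suc n) / (2 * pi * \<i> * of_nat (Suc n))
          * z ^ Suc n) sums (the_inv_into (ball c \<rho>) F z - c)"
        by fastforce
    qed
  qed
qed

section \<open>Dirichlet kernel polynomials\<close>

definition dirichlet_coeff :: "nat \<Rightarrow> nat \<Rightarrow> 'a::comm_ring_1" where
  "dirichlet_coeff n k = (-1) ^ (n + k) * of_nat ((n + k) choose (2 * k))"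

definition dirichlet_poly :: "nat \<Rightarrow> 'a::comm_ring_1 \<Rightarrow> 'a" where
  "dirichlet_poly n y = (\<Sum>k\<le>n. dirichlet_coeff n k * y ^ k)"

lemma dirichlet_coeff_0 [simp]: "dirichlet_coeff n 0 = (-1) ^ n"
  by (simp add: dirichlet_coeff_def)

lemma dirichlet_coeff_eq_0: "n < k \<Longrightarrow> dirichlet_coeff n k = 0"
  by (simp add: dirichlet_coeff_def binomial_eq_0)

lemma dirichlet_poly_atMost: "n \<le> N \<Longrightarrow> (\<Sum>k\<le>N. dirichlet_coeff n k * y ^ k) = dirichlet_poly n y"
  unfolding dirichlet_poly_def by (rule sum.mono_neutral_right) (auto simp: dirichlet_coeff_eq_0)

lemma dirichlet_poly_shift:
  assumes "n \<le> Suc N"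
  shows "dirichlet_poly n y = (-1) ^ n + (\<Sum>k\<le>N. dirichlet_coeff n (Suc k) * y ^ Suc k)"
proof -
  have "dirichlet_poly n y = (\<Sum>k\<le>Suc N. dirichlet_coeff n k * y ^ k)"
    by (rule dirichlet_poly_atMost[OF assms, symmetric])
  also have "\<dots> = (-1) ^ n + (\<Sum>k\<le>N. dirichlet_coeff n (Suc k) * y ^ Suc k)"
    by (subst sum.atMost_Suc_shift) simp
  finally show ?thesis .
qed

lemma dirichlet_coeff_Suc_Suc:
  "dirichlet_coeff (Suc (Suc n)) (Suc k)
     = dirichlet_coeff (Suc n) k - 2 * dirichlet_coeff (Suc n) (Suc k) - dirichlet_coeff n (Suc k)"
proof -
  have "(n + k + 3 choose (2 * k + 2)) + (n + k + 1 choose (2 * k + 2))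
      = (n + k + 1 choose (2 * k)) + 2 * (n + k + 2 choose (2 * k + 2))"
    by (simp add: numeral_3_eq_3 numeral_2_eq_2 binomial_Suc_Suc)
  then have "(of_nat (n + k + 3 choose (2 * k + 2)) :: 'a) + of_nat (n + k + 1 choose (2 * k + 2))
      = of_nat (n + k + 1 choose (2 * k)) + 2 * of_nat (n + k + 2 choose (2 * k + 2))"
    by (metis (mono_tags, lifting) of_nat_add of_nat_mult of_nat_numeral)
  then show ?thesis
    by (simp add: dirichlet_coeff_def algebra_simps numeral_3_eq_3 numeral_2_eq_2)
qed

lemma dirichlet_poly_Suc_Suc:
  "dirichlet_poly (Suc (Suc n)) y = (y - 2) * dirichlet_poly (Suc n) y - dirichlet_poly n y"
proof -
  have "dirichlet_poly (Suc (Suc n)) y = (-1) ^ n + (\<Sum>k\<le>Suc n. dirichlet_coeff (Suc n) k * y ^ Suc k)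
      - 2 * (\<Sum>k\<le>Suc n. dirichlet_coeff (Suc n) (Suc k) * y ^ Suc k)
      - (\<Sum>k\<le>Suc n. dirichlet_coeff n (Suc k) * y ^ Suc k)"
    by (simp add: dirichlet_poly_shift[of _ "Suc n"] dirichlet_coeff_Suc_Suc algebra_simps
        sum_subtractf sum_distrib_left sum.distrib)
  also have "(\<Sum>k\<le>Suc n. dirichlet_coeff (Suc n) k * y ^ Suc k) = y * dirichlet_poly (Suc n) y"
    unfolding dirichlet_poly_def sum_distrib_left by (intro sum.cong refl) (simp add: mult_ac)
  finally show ?thesis
    by (simp add: dirichlet_poly_shift[of "Suc n" "Suc n"] dirichlet_poly_shift[of n "Suc n"]
        algebra_simps)
qed

lemma dirichlet_poly_kernel:
  fixes x :: "'a::field"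
  assumes "x \<noteq> 0"
  shows "x ^ n * dirichlet_poly n ((1 + x)\<^sup>2 / x) = (\<Sum>j<2 * n + 1. x ^ j)"
proof -
  define y where "y = (1 + x)\<^sup>2 / x"
  have xy: "x * (y - 1) = 1 + x + x\<^sup>2" "x * (y - 2) = 1 + x\<^sup>2"
    using assms by (simp_all add: y_def field_simps power2_eq_square)
  have "x ^ n * dirichlet_poly n y = (\<Sum>j<2 * n + 1. x ^ j)
      \<and> x ^ Suc n * dirichlet_poly (Suc n) y = (\<Sum>j<2 * Suc n + 1. x ^ j)"
  proof (induction n)
    case 0
    then show ?case
      using xy(1) by (simp add: dirichlet_poly_def dirichlet_coeff_def eval_nat_numeral algebra_simps)
  next
    case (Suc n)
    have "x ^ Suc (Suc n) * dirichlet_poly (Suc (Suc n)) y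
        = x * (y - 2) * (x ^ Suc n * dirichlet_poly (Suc n) y) - x\<^sup>2 * (x ^ n * dirichlet_poly n y)"
      by (simp add: dirichlet_poly_Suc_Suc algebra_simps power2_eq_square)
    also have "\<dots> = (\<Sum>j<2 * Suc (Suc n) + 1. x ^ j)"
      using Suc.IH unfolding xy(2) by (simp add: eval_nat_numeral algebra_simps)
    finally show ?case using Suc.IH by simp
  qed
  then show ?thesis by (simp add: y_def)
qed

lemma inverse_power_eq_dirichlet_poly_diff:
  fixes x :: "'a::field"
  assumes x: "x \<noteq> 0" and n: "n \<ge> 1"
  shows "1 / x ^ n = dirichlet_poly n ((1 + x)\<^sup>2 / x) - dirichlet_poly (n - 1) ((1 + x)\<^sup>2 / x) - x ^ n"
proof -
  define y where "y = (1 + x)\<^sup>2 / x"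
  obtain m where m: "n = Suc m" using n by (cases n) auto
  have "(\<Sum>j<2 * Suc m + 1. x ^ j) = (\<Sum>j<Suc (2 * m + 2). x ^ j)"
    by simp
  also have "\<dots> = 1 + (\<Sum>j<2 * m + 2. x ^ Suc j)"
    by (subst sum.lessThan_Suc_shift) simp
  also have "\<dots> = 1 + (\<Sum>j<2 * m + 1. x ^ Suc j) + x ^ (2 * Suc m)"
    by (simp add: eval_nat_numeral)
  also have "(\<Sum>j<2 * m + 1. x ^ Suc j) = x * (\<Sum>j<2 * m + 1. x ^ j)"
    by (simp only: sum_distrib_left power_Suc)
  finally have geometric: "(\<Sum>j<2 * Suc m + 1. x ^ j) - x * (\<Sum>j<2 * m + 1. x ^ j)
      = 1 + x ^ Suc m * x ^ Suc m"
    by (simp flip: power_add mult_2)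
  have "x ^ Suc m * (dirichlet_poly (Suc m) y - dirichlet_poly m y)
      = (\<Sum>j<2 * Suc m + 1. x ^ j) - x * (\<Sum>j<2 * m + 1. x ^ j)"
    using dirichlet_poly_kernel[OF x, of "Suc m"] dirichlet_poly_kernel[OF x, of m]
    by (simp add: y_def algebra_simps)
  then show ?thesis
    unfolding geometric using x by (simp add: m y_def field_simps)
qed

lemma dirichlet_coeff_diff:
  assumes "1 \<le> k" "k \<le> n"
  shows "dirichlet_coeff n k - dirichlet_coeff (n - 1) k
    = ((-1) ^ n * ((-1) ^ k * (2 * of_nat n / of_nat (n + k)) * of_nat ((n + k) choose (n - k)))
        :: 'a::field_char_0)"
proof -
  obtain m where m: "n = Suc m" using assms by (cases n) auto
  define C1 :: 'a where "C1 = of_nat ((n + k) choose (2 * k))"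
  define C2 :: 'a where "C2 = of_nat ((n + k - 1) choose (2 * k))"
  have nk: "(of_nat (n + k) :: 'a) \<noteq> 0" using assms by (metis add_is_0 not_one_le_zero of_nat_eq_0_iff)
  have "(n - k) * ((n + k) choose (2 * k)) = (n + k) * ((n + k - 1) choose (2 * k))"
    using binomial_absorb_comp[of "n + k" "2 * k"] assms by (simp add: mult_2)
  then have "of_nat (n - k) * C1 = of_nat (n + k) * C2"
    unfolding C1_def C2_def by (metis of_nat_mult)
  then have "C1 + C2 = (of_nat (n + k) + of_nat (n - k)) * C1 / of_nat (n + k)"
    using nk by (simp add: field_simps)
  also have "(of_nat (n + k) + of_nat (n - k) :: 'a) = 2 * of_nat n"
    using assms by (simp add: of_nat_diff)
  finally have "C1 + C2 = 2 * of_nat n * C1 / of_nat (n + k)" .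
  moreover have "(n + k) choose (n - k) = (n + k) choose (2 * k)"
    using binomial_symmetric[of "n - k" "n + k"] assms by (simp add: mult_2)
  moreover have "dirichlet_coeff n k - dirichlet_coeff (n - 1) k = (-1) ^ (n + k) * (C1 + C2)"
    using assms by (simp add: dirichlet_coeff_def C1_def C2_def m algebra_simps)
  ultimately show ?thesis
    by (simp add: C1_def power_add mult_ac)
qed

lemma sum_dirichlet_coeff_diff:
  fixes b :: "nat \<Rightarrow> 'a::field_char_0"
  assumes b0: "b 0 = 0" and n: "n \<ge> 1"
  shows "(\<Sum>k\<le>n. dirichlet_coeff n k * b k) - (\<Sum>k\<le>n - 1. dirichlet_coeff (n - 1) k * b k)
    = (-1) ^ n * (\<Sum>k=1..n. (-1) ^ k * (2 * of_nat n / of_nat (n + k))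
        * of_nat ((n + k) choose (n - k)) * b k)"
proof -
  have "(\<Sum>k\<le>n - 1. dirichlet_coeff (n - 1) k * b k) = (\<Sum>k\<le>n. dirichlet_coeff (n - 1) k * b k)"
    by (rule sum.mono_neutral_left) (auto simp: dirichlet_coeff_eq_0)
  then have "(\<Sum>k\<le>n. dirichlet_coeff n k * b k) - (\<Sum>k\<le>n - 1. dirichlet_coeff (n - 1) k * b k)
      = (\<Sum>k\<le>n. (dirichlet_coeff n k - dirichlet_coeff (n - 1) k) * b k)"
    by (simp add: sum_subtractf algebra_simps)
  also have "\<dots> = (\<Sum>k=1..n. (dirichlet_coeff n k - dirichlet_coeff (n - 1) k) * b k)"
    by (rule sum.mono_neutral_right) (auto simp: b0 Suc_le_eq)
  also have "\<dots> = (-1) ^ n * (\<Sum>k=1..n. (-1) ^ k * (2 * of_nat n / of_nat (n + k))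
        * of_nat ((n + k) choose (n - k)) * b k)"
    unfolding sum_distrib_left
    by (intro sum.cong refl) (simp only: dirichlet_coeff_diff mult.assoc atLeastAtMost_iff)
  finally show ?thesis .
qed

section \<open>The maps \<open>phi\<close> and \<open>Phi\<close> near \<open>1\<close>\<close>

definition phi_cofactor :: "real \<Rightarrow> real \<Rightarrow> complex \<Rightarrow> complex" where
  "phi_cofactor \<kappa> t z =
     z\<^sup>2 / (z\<^sup>2 - (of_real \<kappa>)\<^sup>2) * (4 * (exp (of_real t * z) / (z + 1)) / (1 + xi2 t z)\<^sup>2)"

lemma phi_eq_cofactor: "phi \<kappa> t z = (z - 1) * phi_cofactor \<kappa> t z"
  by (simp add: phi_def phi_cofactor_def alpha_inv_def xi2_def divide_inverse mult_ac)

lemma one_plus_csqrt_nonzero: "1 + csqrt w \<noteq> 0"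
proof
  assume "1 + csqrt w = 0"
  then have "1 + Re (csqrt w) = 0" by (metis plus_complex.sel(1) one_complex.sel(1) zero_complex.sel(1))
  with Re_csqrt[of w] show False by linarith
qed

lemma one_plus_alpha: "1 + alpha u = 2 / (1 + csqrt (1 - u))"
  using one_plus_csqrt_nonzero[of "1 - u"] by (simp add: alpha_def field_simps)

lemma one_plus_alpha_nonzero: "1 + alpha u \<noteq> 0"
  using one_plus_csqrt_nonzero[of "1 - u"] by (simp add: one_plus_alpha)

lemma alpha_inv_alpha: "alpha_inv (alpha u) = u"
proof -
  define s where "s = csqrt (1 - u)"
  have s: "1 + s \<noteq> 0" by (simp add: s_def one_plus_csqrt_nonzero)
  have "alpha_inv (alpha u) = 4 * alpha u / (2 / (1 + s))\<^sup>2"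
    by (simp add: alpha_inv_def one_plus_alpha s_def)
  also have "\<dots> = alpha u * (1 + s)\<^sup>2"
    using s by (simp add: power_divide)
  also have "\<dots> = (1 - s) * (1 + s)"
    using s by (simp add: alpha_def s_def[symmetric] power2_eq_square)
  also have "\<dots> = 1 - s\<^sup>2" by (simp add: algebra_simps power2_eq_square)
  finally show ?thesis by (simp add: s_def)
qed

lemma phi_eq_alpha_inv_Phi: "phi \<kappa> t z = alpha_inv (Phi \<kappa> t z)"
  by (simp add: Phi_def alpha_inv_alpha)

lemma Phi_1 [simp]: "Phi \<kappa> t 1 = 0"
  by (simp add: Phi_def alpha_def phi_eq_cofactor)

lemma isCont_eventually_neq:
  fixes f :: "'a::t2_space \<Rightarrow> 'b::t2_space"
  assumes "isCont f a" "f a \<noteq> c"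
  shows "eventually (\<lambda>z. f z \<noteq> c) (nhds a)"
  using assms tendsto_imp_eventually_ne by (auto simp: isCont_def tendsto_at_iff_tendsto_nhds)

lemma isCont_eventually_norm_less:
  fixes f :: "'a::t2_space \<Rightarrow> 'b::real_normed_vector"
  assumes "isCont f a" "norm (f a) < e"
  shows "eventually (\<lambda>z. norm (f z) < e) (nhds a)"
  using assms order_tendstoD(2)[OF tendsto_norm]
  by (auto simp: isCont_def tendsto_at_iff_tendsto_nhds)

lemma eventually_phi_regular_near_1:
  assumes "-1 < \<kappa>" "\<kappa> < 1"
  shows "eventually (\<lambda>z. z + 1 \<noteq> 0 \<and> z\<^sup>2 - (of_real \<kappa>)\<^sup>2 \<noteq> 0 \<and> 1 + xi2 t z \<noteq> 0
      \<and> phi_cofactor \<kappa> t z \<noteq> 0 \<and> norm (phi \<kappa> t z) < 1) (nhds 1)"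
proof -
  have "\<kappa>\<^sup>2 < 1" using assms by (simp add: abs_square_less_1)
  then have \<kappa>: "(of_real \<kappa> :: complex)\<^sup>2 \<noteq> 1"
    by (metis of_real_eq_1_iff of_real_power less_irrefl)
  have xi: "xi2 t 1 = 0" by (simp add: xi2_def)
  have cont: "isCont (phi_cofactor \<kappa> t) 1" "isCont (phi \<kappa> t) 1"
    unfolding phi_eq_cofactor[abs_def] phi_cofactor_def xi2_def
    using \<kappa> by (auto intro!: continuous_intros)
  show ?thesis
    by (intro eventually_conj isCont_eventually_neq isCont_eventually_norm_less cont)
       (use \<kappa> in \<open>auto simp: xi xi2_def phi_cofactor_def phi_eq_cofactor intro!: continuous_intros\<close>)
qed

lemma deriv_phi_1:
  assumes "phi_cofactor \<kappa> t holomorphic_on ball 1 R" "R > 0"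
  shows "deriv (phi \<kappa> t) 1 = phi_cofactor \<kappa> t 1"
proof -
  have "(phi_cofactor \<kappa> t has_field_derivative deriv (phi_cofactor \<kappa> t) 1) (at 1)"
    using assms by (intro holomorphic_derivI[OF assms(1) open_ball]) simp
  then have "((\<lambda>z. (z - 1) * phi_cofactor \<kappa> t z) has_field_derivative phi_cofactor \<kappa> t 1) (at 1)"
    by (auto intro!: derivative_eq_intros)
  then show ?thesis
    unfolding phi_eq_cofactor[abs_def] by (rule DERIV_imp_deriv)
qed

lemma csqrt_one_minus_holomorphic:
  assumes "f holomorphic_on S" "\<And>z. z \<in> S \<Longrightarrow> norm (f z) < 1"
  shows "(\<lambda>z. csqrt (1 - f z)) holomorphic_on S"
proof -
  have "1 - f z \<notin> \<real>\<^sub>\<le>\<^sub>0" if "z \<in> S" for z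
    using complex_Re_le_cmod[of "f z"] assms(2)[OF that] by (auto simp: complex_nonpos_Reals_iff)
  then show ?thesis by (intro holomorphic_intros assms(1))
qed

lemma Phi_univalent_near_1:
  assumes "-1 < \<kappa>" "\<kappa> < 1"
  obtains R where "R > 0" "phi_cofactor \<kappa> t holomorphic_on ball 1 R"
    "\<And>z. z \<in> ball 1 R \<Longrightarrow> phi_cofactor \<kappa> t z \<noteq> 0"
    "Phi \<kappa> t holomorphic_on ball 1 R" "inj_on (Phi \<kappa> t) (ball 1 R)"
proof -
  obtain \<delta> where \<delta>: "\<delta> > 0" and regular: "\<And>z. z \<in> ball 1 \<delta> \<Longrightarrow> z + 1 \<noteq> 0
      \<and> z\<^sup>2 - (of_real \<kappa>)\<^sup>2 \<noteq> 0 \<and> 1 + xi2 t z \<noteq> 0 \<and> phi_cofactor \<kappa> t z \<noteq> 0 \<and> norm (phi \<kappa> t z) < 1"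
    using eventually_phi_regular_near_1[OF assms, of t]
    unfolding eventually_nhds_metric by (metis dist_commute mem_ball)
  have holq: "phi_cofactor \<kappa> t holomorphic_on ball 1 \<delta>"
    unfolding phi_cofactor_def[abs_def] xi2_def
    by (intro holomorphic_intros) (use regular in \<open>auto simp: xi2_def\<close>)
  have holphi: "phi \<kappa> t holomorphic_on ball 1 \<delta>"
    unfolding phi_eq_cofactor[abs_def] by (intro holomorphic_intros holq)
  have "(\<lambda>z. csqrt (1 - phi \<kappa> t z)) holomorphic_on ball 1 \<delta>"
    by (rule csqrt_one_minus_holomorphic[OF holphi]) (use regular in blast)
  then have "(\<lambda>z. (1 - csqrt (1 - phi \<kappa> t z)) / (1 + csqrt (1 - phi \<kappa> t z))) holomorphic_on ball 1 \<delta>"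
    by (intro holomorphic_on_divide holomorphic_on_diff holomorphic_on_add holomorphic_on_const)
       (auto simp: one_plus_csqrt_nonzero)
  then have holPhi: "Phi \<kappa> t holomorphic_on ball 1 \<delta>"
    by (simp add: Phi_def alpha_def o_def)
  have one: "1 \<in> ball 1 \<delta>" using \<delta> by simp
  have "deriv (phi \<kappa> t) 1 \<noteq> 0"
    using deriv_phi_1[OF holq \<delta>] regular[OF one] by simp
  from has_complex_derivative_locally_injective[OF holphi one open_ball this]
  obtain r where r: "r > 0" "ball (1::complex) r \<subseteq> ball 1 \<delta>" "inj_on (phi \<kappa> t) (ball 1 r)" .
  have inj: "inj_on (Phi \<kappa> t) (ball 1 r)"
    using r(3) by (metis inj_on_def phi_eq_alpha_inv_Phi)
  have nonzero: "phi_cofactor \<kappa> t z \<noteq> 0" if "z \<in> ball 1 r" for z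
    using regular r(2) that by blast
  show thesis
    by (rule that[OF r(1) holomorphic_on_subset[OF holq r(2)] nonzero
          holomorphic_on_subset[OF holPhi r(2)] inj])
qed

section \<open>Contour integrals around \<open>1\<close>\<close>

context
  fixes \<kappa> t R \<rho> :: real
  assumes cofactor_holomorphic: "phi_cofactor \<kappa> t holomorphic_on ball 1 R"
    and cofactor_nonzero: "\<And>z. z \<in> ball 1 R \<Longrightarrow> phi_cofactor \<kappa> t z \<noteq> 0"
    and radius: "0 < \<rho>" "\<rho> < R"
begin

lemma path_image_circlepath_1: "path_image (circlepath 1 \<rho>) = sphere 1 \<rho>"
  using radius by (simp add: path_image_circlepath_nonneg)

lemma phi_nonzero_on_sphere: "w \<in> sphere 1 \<rho> \<Longrightarrow> phi \<kappa> t w \<noteq> 0"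
  using cofactor_nonzero[of w] radius by (auto simp: phi_eq_cofactor)

lemma contour_integrable_power_4_div_phi:
  "(\<lambda>w. (4 / phi \<kappa> t w) ^ k) contour_integrable_on circlepath 1 \<rho>"
proof -
  have "continuous_on (sphere 1 \<rho>) (phi \<kappa> t)"
    unfolding phi_eq_cofactor[abs_def] using radius
    by (intro continuous_intros continuous_on_subset[OF holomorphic_on_imp_continuous_on[OF
          cofactor_holomorphic]]) auto
  then show ?thesis
    by (intro contour_integrable_continuous_circlepath, unfold path_image_circlepath_1)
       (intro continuous_intros, auto simp: phi_nonzero_on_sphere)
qed

text \<open>Since \<open>4 / phi = 4 / ((z - 1) \<cdot> phi_cofactor)\<close>, this is Cauchy's formula for the
  \<open>(k - 1)\<close>-th derivative of \<open>(1 / phi_cofactor)\<^sup>k = phi_quot\<^sup>k\<close> at \<open>1\<close>.\<close>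

lemma contour_integral_power_4_div_phi:
  "contour_integral (circlepath 1 \<rho>) (\<lambda>w. (4 / phi \<kappa> t w) ^ k) = 2 * pi * \<i> * b_coef \<kappa> t k"
proof (cases k)
  case 0
  have "((\<lambda>w. 1) has_contour_integral 0) (circlepath 1 \<rho>)"
    by (rule Cauchy_theorem_disc_simple[of _ 1 R]) (use radius in auto)
  then show ?thesis using 0 by (simp add: contour_integral_unique b_coef_def)
next
  case (Suc j)
  define f where "f = (\<lambda>w. (1 / phi_cofactor \<kappa> t w) ^ Suc j)"
  have "cball 1 \<rho> \<subseteq> ball 1 R" using radius by auto
  then have holf: "f holomorphic_on cball 1 \<rho>"
    unfolding f_def by (intro holomorphic_intros holomorphic_on_subset[OF cofactor_holomorphic])
       (use cofactor_nonzero in auto)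
  have cauchy: "((\<lambda>w. f w / (w - 1) ^ Suc j) has_contour_integral
      (2 * pi * \<i> / fact j * (deriv ^^ j) f 1)) (circlepath 1 \<rho>)"
    by (rule Cauchy_has_contour_integral_higher_derivative_circlepath
        [OF holomorphic_on_imp_continuous_on[OF holf] holomorphic_on_subset[OF holf]])
       (use radius in auto)
  have "(4 / phi \<kappa> t w) ^ Suc j = 4 ^ Suc j * (f w / (w - 1) ^ Suc j)"
    if "w \<in> path_image (circlepath 1 \<rho>)" for w
    using phi_nonzero_on_sphere[of w] that
    by (simp add: f_def phi_eq_cofactor power_divide power_mult_distrib)
  then have integral: "((\<lambda>w. (4 / phi \<kappa> t w) ^ Suc j) has_contour_integral
      (4 ^ Suc j * (2 * pi * \<i> / fact j * (deriv ^^ j) f 1))) (circlepath 1 \<rho>)"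
    by (intro has_contour_integral_eq[OF has_contour_integral_lmul[OF cauchy]]) simp
  have "\<forall>\<^sub>F z in nhds 1. z \<in> ball 1 R"
    by (rule eventually_nhds_ball) (use radius in simp)
  then have "\<forall>\<^sub>F z in nhds 1. f z = phi_quot \<kappa> t z ^ Suc j"
  proof eventually_elim
    case (elim z)
    then show ?case
      using cofactor_nonzero[of z]
      by (cases "z = 1") (simp_all add: f_def phi_quot_def deriv_phi_1[OF cofactor_holomorphic]
          phi_eq_cofactor)
  qed
  then have "(deriv ^^ j) f 1 = (deriv ^^ j) (\<lambda>z. phi_quot \<kappa> t z ^ Suc j) 1"
    by (rule higher_deriv_cong_ev) simp
  then have "(deriv ^^ j) f 1 = fact (Suc j) * a_coef \<kappa> t (Suc j)"
    by (simp add: a_coef_def del: fact_Suc)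
  moreover have "(4::complex) ^ Suc j * (2 * pi * \<i> / fact j * (fact (Suc j) * a_coef \<kappa> t (Suc j)))
      = 2 * pi * \<i> * b_coef \<kappa> t (Suc j)"
    using power_mult[of "2::complex" 2 "Suc j"] by (simp add: b_coef_def fact_Suc field_simps)
  ultimately show ?thesis
    using Suc contour_integral_unique[OF integral] by simp
qed

lemma contour_integral_dirichlet_poly_4_div_phi:
  "contour_integral (circlepath 1 \<rho>) (\<lambda>w. dirichlet_poly N (4 / phi \<kappa> t w))
    = 2 * pi * \<i> * (\<Sum>k\<le>N. dirichlet_coeff N k * b_coef \<kappa> t k)"
proof -
  have "contour_integral (circlepath 1 \<rho>) (\<lambda>w. dirichlet_poly N (4 / phi \<kappa> t w))
      = (\<Sum>k\<le>N. contour_integral (circlepath 1 \<rho>) (\<lambda>w. dirichlet_coeff N k * (4 / phi \<kappa> t w) ^ k))"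
    unfolding dirichlet_poly_def
    by (rule contour_integral_sum) (auto intro: contour_integrable_lmul contour_integrable_power_4_div_phi)
  also have "\<dots> = (\<Sum>k\<le>N. dirichlet_coeff N k * (2 * pi * \<i> * b_coef \<kappa> t k))"
    by (simp add: contour_integral_lmul contour_integrable_power_4_div_phi contour_integral_power_4_div_phi)
  finally show ?thesis
    by (simp add: sum_distrib_left mult_ac)
qed

lemma contour_integral_inverse_power_Phi:
  assumes Phi_holomorphic: "Phi \<kappa> t holomorphic_on ball 1 R" and n: "n \<ge> 1"
  shows "contour_integral (circlepath 1 \<rho>) (\<lambda>w. 1 / Phi \<kappa> t w ^ n) = 2 * pi * \<i> * of_nat n * c_coef \<kappa> t n"
proof -
  define D where "D = (\<lambda>N w. dirichlet_poly N (4 / phi \<kappa> t w))"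
  have Phi_integral: "contour_integral (circlepath 1 \<rho>) (\<lambda>w. Phi \<kappa> t w ^ n) = 0"
    by (intro contour_integral_unique Cauchy_theorem_disc_simple[of _ 1 R] holomorphic_intros
        Phi_holomorphic) (use radius in auto)
  have "1 / Phi \<kappa> t w ^ n = D n w - D (n - 1) w - Phi \<kappa> t w ^ n" if "w \<in> sphere 1 \<rho>" for w
  proof -
    have "Phi \<kappa> t w \<noteq> 0"
      using phi_nonzero_on_sphere[OF that] by (auto simp: phi_eq_alpha_inv_Phi alpha_inv_def)
    moreover have "1 + Phi \<kappa> t w \<noteq> 0"
      by (simp add: Phi_def one_plus_alpha_nonzero)
    moreover have "4 / phi \<kappa> t w = (1 + Phi \<kappa> t w)\<^sup>2 / Phi \<kappa> t w"
      using calculation by (simp add: phi_eq_alpha_inv_Phi alpha_inv_def)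
    ultimately show ?thesis
      unfolding D_def using inverse_power_eq_dirichlet_poly_diff n by simp
  qed
  then have "contour_integral (circlepath 1 \<rho>) (\<lambda>w. 1 / Phi \<kappa> t w ^ n)
      = contour_integral (circlepath 1 \<rho>) (\<lambda>w. D n w - D (n - 1) w - Phi \<kappa> t w ^ n)"
    by (intro contour_integral_eq) (use radius in auto)
  also have "\<dots> = contour_integral (circlepath 1 \<rho>) (D n) - contour_integral (circlepath 1 \<rho>) (D (n - 1))
      - contour_integral (circlepath 1 \<rho>) (\<lambda>w. Phi \<kappa> t w ^ n)"
  proof -
    have "D N contour_integrable_on circlepath 1 \<rho>" for N
      unfolding D_def dirichlet_poly_def
      by (intro contour_integrable_sum finite_atMost contour_integrable_lmul
          contour_integrable_power_4_div_phi)
    moreover have "(\<lambda>w. Phi \<kappa> t w ^ n) contour_integrable_on circlepath 1 \<rho>"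
      by (intro contour_integrable_holomorphic_simple[of _ "ball 1 R"] holomorphic_intros Phi_holomorphic)
         (use radius in \<open>auto simp: valid_path_circlepath\<close>)
    ultimately show ?thesis
      by (simp add: contour_integral_diff contour_integrable_diff)
  qed
  also have "\<dots> = 2 * pi * \<i> * ((\<Sum>k\<le>n. dirichlet_coeff n k * b_coef \<kappa> t k)
      - (\<Sum>k\<le>n - 1. dirichlet_coeff (n - 1) k * b_coef \<kappa> t k))"
    by (simp add: D_def contour_integral_dirichlet_poly_4_div_phi right_diff_distrib Phi_integral)
  also have "\<dots> = 2 * pi * \<i> * ((-1) ^ n * (\<Sum>k=1..n. (-1) ^ k * (2 * of_nat n / of_nat (n + k))
      * of_nat ((n + k) choose (n - k)) * b_coef \<kappa> t k))"
    using sum_dirichlet_coeff_diff[of "b_coef \<kappa> t", OF _ n] by (simp add: b_coef_def)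
  also have "\<dots> = 2 * pi * \<i> * of_nat n * c_coef \<kappa> t n"
    using n by (simp add: c_coef_def)
  finally show ?thesis .
qed

end

theorem corollary3p2:
  fixes t \<kappa> :: real
  assumes "t > 0" and "-1 < \<kappa>" and "\<kappa> < 1"
  shows "Phi \<kappa> t 1 = 0 \<and>
    (\<exists>S r. open S \<and> 1 \<in> S \<and> inj_on (Phi \<kappa> t) S \<and> r > 0 \<and> ball 0 r \<subseteq> Phi \<kappa> t ` S \<and>
       (\<forall>z \<in> ball 0 r.
          (\<lambda>n. c_coef \<kappa> t (Suc n) * z ^ Suc n) sums (the_inv_into S (Phi \<kappa> t) z - 1)))"
proof -
  obtain R where "R > 0" and cofactor: "phi_cofactor \<kappa> t holomorphic_on ball 1 R"
    and nonzero: "\<And>z. z \<in> ball 1 R \<Longrightarrow> phi_cofactor \<kappa> t z \<noteq> 0"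
    and holomorphic: "Phi \<kappa> t holomorphic_on ball 1 R" and inj: "inj_on (Phi \<kappa> t) (ball 1 R)"
    using Phi_univalent_near_1[OF assms(2,3), of t] by metis
  define \<rho> where "\<rho> = R / 2"
  have \<rho>: "0 < \<rho>" "\<rho> < R" using \<open>R > 0\<close> by (simp_all add: \<rho>_def)
  from Lagrange_inversion_circlepath[OF holomorphic inj Phi_1 \<rho>]
  obtain r where r: "r > 0" "ball 0 r \<subseteq> Phi \<kappa> t ` ball 1 \<rho>"
    and sums: "\<forall>z \<in> ball 0 r.
      (\<lambda>n. contour_integral (circlepath 1 \<rho>) (\<lambda>w. 1 / Phi \<kappa> t w ^ Suc n) / (2 * pi * \<i> * of_nat (Suc n))
             * z ^ Suc n) sums (the_inv_into (ball 1 \<rho>) (Phi \<kappa> t) z - 1)" .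
  have "contour_integral (circlepath 1 \<rho>) (\<lambda>w. 1 / Phi \<kappa> t w ^ Suc n) / (2 * pi * \<i> * of_nat (Suc n))
      = c_coef \<kappa> t (Suc n)" for n
    using contour_integral_inverse_power_Phi[OF cofactor nonzero \<rho> holomorphic, of "Suc n"]
    by (simp del: of_nat_Suc)
  then have "\<forall>z\<in>ball 0 r. (\<lambda>n. c_coef \<kappa> t (Suc n) * z ^ Suc n)
      sums (the_inv_into (ball 1 \<rho>) (Phi \<kappa> t) z - 1)"
    using sums by simp
  moreover have "inj_on (Phi \<kappa> t) (ball 1 \<rho>)"
    using inj \<rho> by (auto intro: inj_on_subset)
  ultimately show ?thesis
    using r \<rho> by (intro conjI Phi_1 exI[of _ "ball 1 \<rho>"] exI[of _ r]) auto
qed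

end
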